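(* Let $n,m,q\ge 1$, let $\mathcal{X}\in\mathfrak{R}^n$ and let $f:\mathcal{X}\to\mathbb{R}^n$, $G:\mathcal{X}\to\mathbb{R}^{n\times m}$, $h:\mathcal{X}\to\mathbb{R}^q$ define the constrained system $\dot x=f(x)+G(x)u$, $y=h(x)$, $x\in\mathcal{X}$, $u\in\mathcal{U}\in\mathfrak{R}^m$. Put $\bar g(x)=\|G(x)G(x)^\intercal\|_\infty$ and assume $f(0)=0$, $h(0)=0$, $\bar g(0)=0$. Let $\Omega\in\mathfrak{R}^n$ with $\Omega\subseteq\mathcal{X}$, and let $\mathcal{T}=\{\sigma_i\}_{i=1}^{m_{\mathcal{T}}}$ be a triangulation of $\Omega$, $\sigma_i=\mathrm{co}(\{x_{i,j}\}_{j=0}^n)$, such that $f,G,h\in\mathcal{C}^2(\mathcal{T})$. For each $i$ let $\beta_i,\tilde\beta_i,\bar\beta_i$ be real numbers with $$\beta_i\ge\max_{p,q',r\in\mathbb{Z}_1^n}\max_{\xi\in\sigma_i}\Big|\tfrac{\partial^2 f^{(p)}}{\partial x^{(q')}\partial x^{(r)}}(\xi)\Big|,\quad \tilde\beta_i\ge\max_{q',r\in\mathbb{Z}_1^n}\max_{\xi\in\sigma_i}\Big|\tfrac{\partial^2 (h^\intercal h)}{\partial x^{(q')}\partial x^{(r)}}(\xi)\Big|,\quad \bar\beta_i\ge\max_{q',r\in\mathbb{Z}_1^n}\max_{\xi\in\sigma_i}\Big|\tfrac{\partial^2 \bar g}{\partial x^{(q')}\partial x^{(r)}}(\xi)\Big|$$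 (the indicated second derivatives being taken on $\sigma_i$), and for $j\in\mathbb{Z}_0^n$ let $$c_{i,j}=\tfrac{n}{2}\|x_{i,j}-x_{i,0}\|_2\big(\max_{k\in\mathbb{Z}_1^n}\|x_{i,k}-x_{i,0}\|_2+\|x_{i,j}-x_{i,0}\|_2\big).$$ For values $\mathbf{V}=\{V_x\}_{x\in\mathbb{E}_{\mathcal{T}}}\subset\mathbb{R}$, vectors $\mathbf{L}=\{l_i\}_{i=1}^{m_{\mathcal{T}}}\subset\mathbb{R}^n$ and scalars $b_1,\gamma$, define $$H_{i,j}=f(x_{i,j})^\intercal\nabla V_i+\tfrac12\|h(x_{i,j})\|_2^2+(1_n^\intercal l_i\,\beta_i+\tfrac12\tilde\beta_i)c_{i,j}+\tfrac{1}{2\gamma}\big(\bar g(x_{i,j})+\bar\beta_i c_{i,j}\big)(1_n^\intercal l_i)^2 .$$ Then there exist $\mathbf{V},\mathbf{L},b_1,\gamma$ satisfying (i) $\gamma>0$; (ii) $V_x\ge0$ for all $x\in\mathbb{E}_{\mathcal{T}}$; (iii) $|\nabla V_i|\le l_i$ (componentwise) for all $i\in\mathbb{Z}_1^{m_{\mathcal{T}}}$; (iv) $H_{i,j}\le -b_1$ for all $i\in\mathbb{Z}_1^{m_{\mathcal{T}}}$ and all $j\in\mathbb{Z}_0^n$ with $x_{i,j}\neq0$. If moreover such values satisfy $b_1>0$, then, with $V$ the CPA interpolation of $\mathbf{V}$ on $\mathcal{T}$, the Hamilton–Jacobi inequality $$\nabla V^\intercal f(x)+\tfrac{1}{2\gamma}\|G(x)^\intercal\nabla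 V\|_2^2+\tfrac12\|h(x)\|_2^2\le 0$$ holds for all $x\in\Omega^\circ$, where at a point $x\in\sigma_i$ the gradient $\nabla V$ is taken to be $\nabla V_i$.
   Context: $\mathfrak{R}^n$ denotes the set of compact $\Omega\subset\mathbb{R}^n$ whose interior $\Omega^\circ$ is connected and contains the origin and with $\Omega=\overline{\Omega^\circ}$. An $n$-simplex is the convex hull of $n+1$ affinely independent points (its vertices). A triangulation of $\Omega\in\mathfrak{R}^n$ is a finite collection $\mathcal{T}=\{\sigma_i\}$ of $n$-simplexes whose union is $\Omega$ and such that any two intersect in a common face or the empty set; $\mathbb{E}_{\mathcal{T}}$ is its set of vertices. Convention: the vertex labelled $x_{i,0}$ of $\sigma_i$ is arbitrary unless $0\in\sigma_i$, in which case $x_{i,0}=0$. A function is in $\mathcal{C}^2(\mathcal{T})$ if it is continuous and $\mathcal{C}^2$ on each simplex of $\mathcal{T}$ (for vector/matrix functions, componentwise). Given vertex values $\{V_x\}$, let $X_i\in\mathbb{R}^{n\times n}$ have $j$-th row $(x_{i,j}-x_{i,0})^\intercal$ and $\bar V_i\in\mathbb{R}^n$ have $j$-th entry $V_{x_{i,j}}-V_{x_{i,0}}$; then $\nabla V_i=X_i^{-1}\bar V_i$ and the CPA (continuous piecewise affine) interpolation $V$ is the unique function affine on each $\sigma_i$ with gradient $\nabla V_i$ there and $V(x)=V_x$ at every vertex. $\|A\|_\infty$ for a matrix is the induced $\infty$-norm; $1_n$ is the all-ones vector; $|v|$ for a vector is componentwise absolute value. *)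

theory Defs
  imports "HOL-Analysis.Analysis"
begin

definition region :: "('a::real_normed_vector) set \<Rightarrow> bool" where
  "region \<Omega> \<longleftrightarrow> compact \<Omega> \<and> connected (interior \<Omega>) \<and> 0 \<in> interior \<Omega>
      \<and> \<Omega> = closure (interior \<Omega>)"

definition ind_inf_norm :: "real^'c^'r \<Rightarrow> real" where
  "ind_inf_norm A = (SUP x\<in>{x::real^'c. infnorm x \<le> 1}. infnorm (A *v x))"

definition gbar :: "(real^'n \<Rightarrow> real^'m^'n) \<Rightarrow> real^'n \<Rightarrow> real" where
  "gbar G x = ind_inf_norm (G x ** transpose (G x))"

text \<open>Second-order differentiability on a set (derivatives taken within the set):
  \<open>D q\<close> is the partial derivative w.r.t. \<open>x\<^sup>(\<^sup>q\<^sup>)\<close>, \<open>D2 q r\<close> is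
  \<open>\<partial>\<^sup>2\<phi>/\<partial>x\<^sup>(\<^sup>r\<^sup>)\<partial>x\<^sup>(\<^sup>q\<^sup>)\<close>.\<close>
definition C2_witness :: "(real^'n) set \<Rightarrow> (real^'n \<Rightarrow> real) \<Rightarrow> ('n \<Rightarrow> real^'n \<Rightarrow> real)
    \<Rightarrow> ('n \<Rightarrow> 'n \<Rightarrow> real^'n \<Rightarrow> real) \<Rightarrow> bool" where
  "C2_witness S \<phi> D D2 \<longleftrightarrow>
     (\<forall>x\<in>S. (\<phi> has_derivative (\<lambda>v. \<Sum>q\<in>UNIV. D q x * v $ q)) (at x within S))
   \<and> (\<forall>q. \<forall>x\<in>S. (D q has_derivative (\<lambda>v. \<Sum>r\<in>UNIV. D2 q r x * v $ r)) (at x within S))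
   \<and> (\<forall>q r. continuous_on S (D2 q r))"

definition C2_on :: "(real^'n) set \<Rightarrow> (real^'n \<Rightarrow> real) \<Rightarrow> bool" where
  "C2_on S \<phi> \<longleftrightarrow> (\<exists>D D2. C2_witness S \<phi> D D2)"

definition C2_bounded :: "(real^'n) set \<Rightarrow> (real^'n \<Rightarrow> real) \<Rightarrow> real \<Rightarrow> bool" where
  "C2_bounded S \<phi> b \<longleftrightarrow>
     (\<exists>D D2. C2_witness S \<phi> D D2 \<and> (\<forall>q r. \<forall>\<xi>\<in>S. \<bar>D2 q r \<xi>\<bar> \<le> b))"

text \<open>Labelled simplices: simplex \<open>i\<close> has vertex \<open>x0 i\<close> (= \<open>x\<^sub>i\<^sub>,\<^sub>0\<close>) and
  vertices \<open>X i k\<close> (= \<open>x\<^sub>i\<^sub>,\<^sub>k\<close>, \<open>k\<close> ranging over the n-element index type).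
  Vertex index \<open>None\<close> stands for \<open>j = 0\<close>, \<open>Some k\<close> for \<open>j = k\<close>.\<close>
definition vert :: "real^'n \<Rightarrow> ('n \<Rightarrow> real^'n) \<Rightarrow> 'n option \<Rightarrow> real^'n" where
  "vert x0 X j = (case j of None \<Rightarrow> x0 | Some k \<Rightarrow> X k)"

definition simplex_of :: "real^'n \<Rightarrow> ('n \<Rightarrow> real^'n) \<Rightarrow> (real^'n) set" where
  "simplex_of x0 X = convex hull (insert x0 (range X))"

definition is_nsimplex_data :: "real^'n \<Rightarrow> ('n \<Rightarrow> real^'n) \<Rightarrow> bool" where
  "is_nsimplex_data x0 X \<longleftrightarrow> inj X \<and> x0 \<notin> range X \<and> \<not> affine_dependent (insert x0 (range X))"

definition triangulation ::
    "(real^'n) set \<Rightarrow> nat \<Rightarrow> (nat \<Rightarrow> real^'n) \<Rightarrow> (nat \<Rightarrow> 'n \<Rightarrow> real^'n) \<Rightarrow> bool" where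
  "triangulation \<Omega> M x0 X \<longleftrightarrow>
     (\<forall>i<M. is_nsimplex_data (x0 i) (X i))
   \<and> (\<Union>i<M. simplex_of (x0 i) (X i)) = \<Omega>
   \<and> (\<forall>i<M. \<forall>k<M. i \<noteq> k \<longrightarrow> simplex_of (x0 i) (X i) \<noteq> simplex_of (x0 k) (X k))
   \<and> (\<forall>i<M. \<forall>k<M.
        (simplex_of (x0 i) (X i) \<inter> simplex_of (x0 k) (X k)) face_of simplex_of (x0 i) (X i)
      \<and> (simplex_of (x0 i) (X i) \<inter> simplex_of (x0 k) (X k)) face_of simplex_of (x0 k) (X k))
   \<and> (\<forall>i<M. 0 \<in> simplex_of (x0 i) (X i) \<longrightarrow> x0 i = 0)"

definition vertices_T :: "nat \<Rightarrow> (nat \<Rightarrow> real^'n) \<Rightarrow> (nat \<Rightarrow> 'n \<Rightarrow> real^'n) \<Rightarrow> (real^'n) set" where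
  "vertices_T M x0 X = {vert (x0 i) (X i) j | i j. i < M}"

definition cpa_grad :: "(real^'n \<Rightarrow> real) \<Rightarrow> real^'n \<Rightarrow> ('n \<Rightarrow> real^'n) \<Rightarrow> real^'n" where
  "cpa_grad V x0 X = matrix_inv (\<chi> j. X j - x0) *v (\<chi> j. V (X j) - V x0)"

definition c_coef :: "real^'n \<Rightarrow> ('n \<Rightarrow> real^'n) \<Rightarrow> 'n option \<Rightarrow> real" where
  "c_coef x0 X j = real CARD('n) / 2 * norm (vert x0 X j - x0)
      * (Max (range (\<lambda>k. norm (X k - x0))) + norm (vert x0 X j - x0))"

definition one_dot :: "real^'n \<Rightarrow> real" where
  "one_dot l = (\<Sum>k\<in>UNIV. l $ k)"

definition H_val ::
  "(real^'n \<Rightarrow> real^'n) \<Rightarrow> (real^'n \<Rightarrow> real^'m^'n) \<Rightarrow> (real^'n \<Rightarrow> real^'q)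
   \<Rightarrow> real \<Rightarrow> real \<Rightarrow> real \<Rightarrow> (real^'n \<Rightarrow> real) \<Rightarrow> real^'n \<Rightarrow> real
   \<Rightarrow> real^'n \<Rightarrow> ('n \<Rightarrow> real^'n) \<Rightarrow> 'n option \<Rightarrow> real" where
  "H_val f G h \<beta> \<beta>t \<beta>b V l \<gamma> x0 X j =
     f (vert x0 X j) \<bullet> cpa_grad V x0 X + 1/2 * (norm (h (vert x0 X j)))\<^sup>2
     + (one_dot l * \<beta> + 1/2 * \<beta>t) * c_coef x0 X j
     + 1 / (2 * \<gamma>) * (gbar G (vert x0 X j) + \<beta>b * c_coef x0 X j) * (one_dot l)\<^sup>2"

definition conds ::
  "(real^'n \<Rightarrow> real^'n) \<Rightarrow> (real^'n \<Rightarrow> real^'m^'n) \<Rightarrow> (real^'n \<Rightarrow> real^'q)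
   \<Rightarrow> nat \<Rightarrow> (nat \<Rightarrow> real^'n) \<Rightarrow> (nat \<Rightarrow> 'n \<Rightarrow> real^'n)
   \<Rightarrow> (nat \<Rightarrow> real) \<Rightarrow> (nat \<Rightarrow> real) \<Rightarrow> (nat \<Rightarrow> real)
   \<Rightarrow> (real^'n \<Rightarrow> real) \<Rightarrow> (nat \<Rightarrow> real^'n) \<Rightarrow> real \<Rightarrow> real \<Rightarrow> bool" where
  "conds f G h M x0 X \<beta> \<beta>t \<beta>b V L b1 \<gamma> \<longleftrightarrow>
     \<gamma> > 0
   \<and> (\<forall>x\<in>vertices_T M x0 X. V x \<ge> 0)
   \<and> (\<forall>i<M. \<forall>k. \<bar>cpa_grad V (x0 i) (X i) $ k\<bar> \<le> L i $ k)
   \<and> (\<forall>i<M. \<forall>j. vert (x0 i) (X i) j \<noteq> 0 \<longrightarrow>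
        H_val f G h (\<beta> i) (\<beta>t i) (\<beta>b i) V (L i) \<gamma> (x0 i) (X i) j \<le> - b1)"

end

theory Submission
  imports Defs
begin

(* Fix a simplex sigma_i and a point x of it, written as a convex combination
   x = sum_j mu_j x_ij of its vertices. If g is C2 on sigma_i with second partials bounded
   by B, expanding every g(x_ij) to second order around x makes the linear terms cancel, so
   g(x) differs from sum_j mu_j g(x_ij) by at most (n B / 2) sum_j mu_j |x_ij - x|^2. Since x
   is the mu-weighted mean of the vertices, this weighted sum of squared distances only grows
   when x is replaced by x_i0, and n/2 |x_ij - x_i0|^2 <= c_ij; so the error is at most
   B sum_j mu_j c_ij. Applying this to the components of f, to h^T h and to gbar, and using
   |G(x)^T w|^2 <= gbar(x) |w|_1^2 and |grad V_i|_1 <= 1^T l_i, the Hamilton-Jacobi expression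
   at x is at most sum_j mu_j H_ij. Every H_ij is <= 0: it is <= -b1 < 0 at nonzero vertices,
   and at a vertex at the origin it vanishes, because f, h and gbar vanish there and the
   vertex is then x_i0, so that c_i0 = 0. *)

lemma first_order_remainder_le:
  fixes \<phi> \<phi>' \<phi>'' :: "real \<Rightarrow> real"
  assumes \<phi>': "\<And>t. t \<in> {0..1} \<Longrightarrow> (\<phi> has_real_derivative \<phi>' t) (at t within {0..1})"
    and \<phi>'': "\<And>t. t \<in> {0..1} \<Longrightarrow> (\<phi>' has_real_derivative \<phi>'' t) (at t within {0..1})"
    and bound: "\<And>t. t \<in> {0..1} \<Longrightarrow> \<phi>'' t \<le> K"
  shows "\<phi> 1 - \<phi> 0 - \<phi>' 0 \<le> K / 2"
proof -
  define \<psi> where "\<psi> t = \<phi> t - t * \<phi>' 0 - K / 2 * t\<^sup>2" for t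
  have "(\<psi> has_derivative (\<lambda>s. s * (\<phi>' t - \<phi>' 0 - K * t))) (at t within {0..1})"
    if "t \<in> {0..1}" for t
    unfolding \<psi>_def using \<phi>'[OF that]
    by (auto intro!: derivative_eq_intros simp: has_field_derivative_def algebra_simps)
  then obtain z where z: "z \<in> {0..1}" "\<psi> 1 - \<psi> 0 = \<phi>' z - \<phi>' 0 - K * z"
    using mvt_very_simple[of 0 1 \<psi> "\<lambda>t s. s * (\<phi>' t - \<phi>' 0 - K * t)"] by auto
  have "\<exists>u\<in>{0..z}. \<phi>' z - \<phi>' 0 = (\<lambda>u s. \<phi>'' u * s) u (z - 0)"
  proof (rule mvt_very_simple)
    fix u assume "0 \<le> u" "u \<le> z"
    with z have "(\<phi>' has_real_derivative \<phi>'' u) (at u within {0..1})"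
      by (intro \<phi>'') auto
    then have "(\<phi>' has_real_derivative \<phi>'' u) (at u within {0..z})"
      by (rule DERIV_subset) (use z in auto)
    then show "(\<phi>' has_derivative (\<lambda>s. \<phi>'' u * s)) (at u within {0..z})"
      by (simp add: has_field_derivative_def)
  qed (use z in simp)
  then obtain u where u: "u \<in> {0..z}" "\<phi>' z - \<phi>' 0 = \<phi>'' u * z"
    by auto
  have "z * \<phi>'' u \<le> z * K"
    using bound[of u] u z by (intro mult_left_mono) auto
  then have "\<psi> 1 - \<psi> 0 \<le> 0"
    using z u by (simp add: algebra_simps)
  then show ?thesis
    unfolding \<psi>_def by simp
qed

lemma abs_first_order_remainder_le:
  fixes \<phi> \<phi>' \<phi>'' :: "real \<Rightarrow> real"
  assumes \<phi>': "\<And>t. t \<in> {0..1} \<Longrightarrow> (\<phi> has_real_derivative \<phi>' t) (at t within {0..1})"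
    and \<phi>'': "\<And>t. t \<in> {0..1} \<Longrightarrow> (\<phi>' has_real_derivative \<phi>'' t) (at t within {0..1})"
    and bound: "\<And>t. t \<in> {0..1} \<Longrightarrow> \<bar>\<phi>'' t\<bar> \<le> K"
  shows "\<bar>\<phi> 1 - \<phi> 0 - \<phi>' 0\<bar> \<le> K / 2"
proof -
  have "\<phi> 1 - \<phi> 0 - \<phi>' 0 \<le> K / 2"
    using first_order_remainder_le[OF \<phi>' \<phi>''] bound by (simp add: abs_le_iff)
  moreover have "(- \<phi> 1) - (- \<phi> 0) - (- \<phi>' 0) \<le> K / 2"
    by (rule first_order_remainder_le[where \<phi>' = "\<lambda>t. - \<phi>' t" and \<phi>'' = "\<lambda>t. - \<phi>'' t"])
       (use \<phi>' \<phi>'' bound in \<open>auto intro!: derivative_eq_intros simp: abs_le_iff\<close>)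
  ultimately show ?thesis
    by linarith
qed

lemma has_real_derivative_along_segment:
  fixes g :: "'a::real_normed_vector \<Rightarrow> real"
  assumes S: "convex S" "x \<in> S" "y \<in> S"
    and g': "\<And>z. z \<in> S \<Longrightarrow> (g has_derivative g' z) (at z within S)"
    and t: "t \<in> {0..1}"
  shows "((\<lambda>t. g (x + t *\<^sub>R (y - x))) has_real_derivative g' (x + t *\<^sub>R (y - x)) (y - x))
           (at t within {0..1})"
proof -
  define p where "p t = x + t *\<^sub>R (y - x)" for t
  have "p ` {0..1} \<subseteq> S"
  proof
    fix z assume "z \<in> p ` {0..1}"
    then obtain u where "u \<in> {0..1}" "z = (1 - u) *\<^sub>R x + u *\<^sub>R y"
      unfolding p_def by (auto simp: algebra_simps)
    then show "z \<in> S"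
      using convexD_alt[OF S] by auto
  qed
  then have "(g has_derivative g' (p t)) (at (p t) within p ` {0..1})"
    using g' t by (blast intro: has_derivative_subset)
  moreover have "(p has_derivative (\<lambda>s. s *\<^sub>R (y - x))) (at t within {0..1})"
    unfolding p_def by (auto intro!: derivative_eq_intros)
  ultimately have "((\<lambda>t. g (p t)) has_derivative (\<lambda>s. g' (p t) (s *\<^sub>R (y - x)))) (at t within {0..1})"
    using diff_chain_within by (fastforce simp: o_def)
  moreover have "linear (g' (p t))"
    using g' t \<open>p ` {0..1} \<subseteq> S\<close> by (blast intro: has_derivative_linear)
  then have "(\<lambda>s. g' (p t) (s *\<^sub>R (y - x))) = (*) (g' (p t) (y - x))"
    by (simp add: linear.scaleR fun_eq_iff mult.commute)
  ultimately show ?thesis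
    unfolding p_def has_field_derivative_def by simp
qed

lemma C2_witness_remainder_le:
  fixes g :: "real^'n \<Rightarrow> real"
  assumes S: "convex S" "x \<in> S" "y \<in> S" and w: "C2_witness S g D D2"
    and bound: "\<And>q r \<xi>. \<xi> \<in> S \<Longrightarrow> \<bar>D2 q r \<xi>\<bar> \<le> B"
  shows "\<bar>g y - g x - (\<Sum>q\<in>UNIV. D q x * (y - x) $ q)\<bar> \<le> B / 2 * (\<Sum>q\<in>UNIV. \<bar>(y - x) $ q\<bar>)\<^sup>2"
proof -
  define d where "d = y - x"
  define p where "p t = x + t *\<^sub>R d" for t
  have p_in_S: "p t \<in> S" if "t \<in> {0..1}" for t
    using convexD_alt[OF S, of t] that by (simp add: p_def d_def algebra_simps)
  have g': "\<And>z. z \<in> S \<Longrightarrow> (g has_derivative (\<lambda>v. \<Sum>q\<in>UNIV. D q z * v $ q)) (at z within S)"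
    and D': "\<And>q z. z \<in> S \<Longrightarrow> (D q has_derivative (\<lambda>v. \<Sum>r\<in>UNIV. D2 q r z * v $ r)) (at z within S)"
    using w unfolding C2_witness_def by auto
  have \<phi>': "((\<lambda>t. g (p t)) has_real_derivative (\<Sum>q\<in>UNIV. D q (p t) * d $ q)) (at t within {0..1})"
    if "t \<in> {0..1}" for t
    unfolding p_def d_def by (rule has_real_derivative_along_segment[OF S g' that])
  have \<phi>'': "((\<lambda>t. \<Sum>q\<in>UNIV. D q (p t) * d $ q) has_real_derivative
      (\<Sum>q\<in>UNIV. (\<Sum>r\<in>UNIV. D2 q r (p t) * d $ r) * d $ q)) (at t within {0..1})"
    if "t \<in> {0..1}" for t
    unfolding p_def d_def
    by (intro DERIV_sum DERIV_cmult_right has_real_derivative_along_segment[OF S D' that])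
  have "\<bar>\<Sum>q\<in>UNIV. (\<Sum>r\<in>UNIV. D2 q r (p t) * d $ r) * d $ q\<bar> \<le> B * (\<Sum>q\<in>UNIV. \<bar>d $ q\<bar>)\<^sup>2"
    if "t \<in> {0..1}" for t
  proof -
    have "\<bar>\<Sum>q\<in>UNIV. (\<Sum>r\<in>UNIV. D2 q r (p t) * d $ r) * d $ q\<bar>
        \<le> (\<Sum>q\<in>UNIV. (\<Sum>r\<in>UNIV. \<bar>D2 q r (p t)\<bar> * \<bar>d $ r\<bar>) * \<bar>d $ q\<bar>)"
      by (rule order_trans[OF sum_abs], rule sum_mono)
         (auto simp: abs_mult intro!: mult_right_mono order_trans[OF sum_abs] sum_mono)
    also have "\<dots> \<le> (\<Sum>q\<in>UNIV. (\<Sum>r\<in>UNIV. B * \<bar>d $ r\<bar>) * \<bar>d $ q\<bar>)"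
      using bound p_in_S[OF that] by (intro sum_mono mult_right_mono) auto
    also have "\<dots> = B * (\<Sum>q\<in>UNIV. \<bar>d $ q\<bar>)\<^sup>2"
      by (simp add: power2_eq_square sum_distrib_left sum_distrib_right algebra_simps)
    finally show ?thesis .
  qed
  then have "\<bar>g (p 1) - g (p 0) - (\<Sum>q\<in>UNIV. D q (p 0) * d $ q)\<bar> \<le> B * (\<Sum>q\<in>UNIV. \<bar>d $ q\<bar>)\<^sup>2 / 2"
    by (intro abs_first_order_remainder_le[OF \<phi>' \<phi>''])
  then show ?thesis
    by (simp add: p_def d_def)
qed

lemma range_vert: "range (vert x0 X) = insert x0 (range X)"
proof -
  have "range (vert x0 X) = vert x0 X ` insert None (range Some)"
    by (simp add: UNIV_option_conv)
  then show ?thesis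
    by (auto simp: vert_def image_image)
qed

lemma inj_vert: "is_nsimplex_data x0 X \<Longrightarrow> inj (vert x0 X)"
  unfolding is_nsimplex_data_def inj_def vert_def by (auto split: option.split)

lemma vert_in_simplex_of: "vert x0 X j \<in> simplex_of x0 X"
  unfolding simplex_of_def range_vert[symmetric] by (rule hull_inc) simp

lemma convex_simplex_of: "convex (simplex_of x0 X)"
  unfolding simplex_of_def by (rule convex_convex_hull)

lemma simplex_of_barycentric:
  assumes "is_nsimplex_data x0 X" "x \<in> simplex_of x0 X"
  obtains \<mu> where "\<And>j. 0 \<le> \<mu> j" "sum \<mu> UNIV = 1" "x = (\<Sum>j\<in>UNIV. \<mu> j *\<^sub>R vert x0 X j)"
proof -
  obtain u where u: "\<forall>y\<in>range (vert x0 X). 0 \<le> u y" "sum u (range (vert x0 X)) = 1"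
    "(\<Sum>y\<in>range (vert x0 X). u y *\<^sub>R y) = x"
    using assms(2) convex_hull_finite[of "range (vert x0 X)"]
    unfolding simplex_of_def range_vert[symmetric] by auto
  have inj: "inj (vert x0 X)"
    using assms(1) by (rule inj_vert)
  show ?thesis
  proof
    show "(\<Sum>j\<in>UNIV. u (vert x0 X j)) = 1"
      using u(2) sum.reindex[OF inj, of u] by simp
    show "x = (\<Sum>j\<in>UNIV. u (vert x0 X j) *\<^sub>R vert x0 X j)"
      using u(3) sum.reindex[OF inj, of "\<lambda>y. u y *\<^sub>R y"] by simp
  qed (use u(1) in auto)
qed

lemma half_card_mult_norm_sq_le_c_coef:
  fixes X :: "'n::finite \<Rightarrow> real^'n"
  shows "real CARD('n) / 2 * (norm (vert x0 X j - x0))\<^sup>2 \<le> c_coef x0 X j"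
proof -
  obtain k :: 'n where True by simp
  have "0 \<le> Max (range (\<lambda>k. norm (X k - x0)))"
    by (rule order_trans[OF norm_ge_zero Max_ge[of _ "norm (X k - x0)"]]) auto
  then have "(norm (vert x0 X j - x0))\<^sup>2
      \<le> norm (vert x0 X j - x0) * (Max (range (\<lambda>k. norm (X k - x0))) + norm (vert x0 X j - x0))"
    by (simp add: power2_eq_square algebra_simps)
  then show ?thesis
    unfolding c_coef_def by (simp add: mult.assoc mult_left_mono)
qed

lemma sum_abs_sq_le_card_mult_norm_sq:
  fixes d :: "real^'n"
  shows "(\<Sum>q\<in>UNIV. \<bar>d $ q\<bar>)\<^sup>2 \<le> real CARD('n) * (norm d)\<^sup>2"
proof -
  have "(\<Sum>q\<in>UNIV. \<bar>d $ q\<bar>)\<^sup>2 \<le> (\<Sum>q\<in>UNIV. \<bar>d $ q\<bar>\<^sup>2) * card (UNIV :: 'n set)"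
    by (rule sum_squared_le_sum_of_squares)
  also have "(\<Sum>q\<in>UNIV. \<bar>d $ q\<bar>\<^sup>2) = (norm d)\<^sup>2"
    unfolding power2_norm_eq_inner by (simp add: inner_vec_def power2_eq_square)
  finally show ?thesis
    by (simp add: mult.commute)
qed

lemma sum_scaleR_centered_eq_0:
  fixes v :: "'j \<Rightarrow> 'a::real_vector"
  assumes "sum \<mu> J = 1" "x = (\<Sum>j\<in>J. \<mu> j *\<^sub>R v j)"
  shows "(\<Sum>j\<in>J. \<mu> j *\<^sub>R (v j - x)) = 0"
  using assms by (simp add: scaleR_diff_right sum_subtractf flip: scaleR_sum_left)

lemma weighted_sum_sq_dist_le:
  fixes v :: "'j \<Rightarrow> 'a::real_inner"
  assumes "sum \<mu> J = 1" "x = (\<Sum>j\<in>J. \<mu> j *\<^sub>R v j)"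
  shows "(\<Sum>j\<in>J. \<mu> j * (norm (v j - x))\<^sup>2) \<le> (\<Sum>j\<in>J. \<mu> j * (norm (v j - y))\<^sup>2)"
proof -
  have "(\<Sum>j\<in>J. \<mu> j * ((v j - x) \<bullet> (x - y))) = (\<Sum>j\<in>J. \<mu> j *\<^sub>R (v j - x)) \<bullet> (x - y)"
    by (simp add: inner_sum_left)
  then have cross: "(\<Sum>j\<in>J. \<mu> j * ((v j - x) \<bullet> (x - y))) = 0"
    by (simp add: sum_scaleR_centered_eq_0[OF assms])
  have "(norm (v j - y))\<^sup>2 = (norm (v j - x))\<^sup>2 + 2 * ((v j - x) \<bullet> (x - y)) + (norm (x - y))\<^sup>2" for j
    unfolding power2_norm_eq_inner
    by (simp add: algebra_simps inner_diff_left inner_diff_right inner_commute)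
  then have "(\<Sum>j\<in>J. \<mu> j * (norm (v j - y))\<^sup>2) = (\<Sum>j\<in>J. \<mu> j * (norm (v j - x))\<^sup>2)
      + 2 * (\<Sum>j\<in>J. \<mu> j * ((v j - x) \<bullet> (x - y))) + sum \<mu> J * (norm (x - y))\<^sup>2"
    by (simp add: distrib_left sum.distrib sum_distrib_left sum_distrib_right mult.left_commute)
  then show ?thesis
    using cross assms(1) by simp
qed

lemma C2_bounded_interpolation_error:
  fixes g :: "real^'n \<Rightarrow> real"
  assumes g: "C2_bounded (simplex_of x0 X) g B"
    and \<mu>: "\<And>j. 0 \<le> \<mu> j" "sum \<mu> UNIV = 1" "x = (\<Sum>j\<in>UNIV. \<mu> j *\<^sub>R vert x0 X j)"
  shows "\<bar>g x - (\<Sum>j\<in>UNIV. \<mu> j * g (vert x0 X j))\<bar> \<le> B * (\<Sum>j\<in>UNIV. \<mu> j * c_coef x0 X j)"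
proof -
  let ?S = "simplex_of x0 X" and ?v = "vert x0 X" and ?n = "real CARD('n)"
  obtain D D2 where w: "C2_witness ?S g D D2" and bound: "\<And>q r \<xi>. \<xi> \<in> ?S \<Longrightarrow> \<bar>D2 q r \<xi>\<bar> \<le> B"
    using g unfolding C2_bounded_def by blast
  have x: "x \<in> ?S"
    unfolding \<mu>(3) using \<mu>(1,2) convex_simplex_of vert_in_simplex_of by (intro convex_sum) auto
  obtain q :: 'n where True by simp
  have B: "0 \<le> B"
    using bound[OF x, of q q] by simp
  define dg where "dg = (\<lambda>v. \<Sum>q\<in>UNIV. D q x * v $ q)"
  have "linear dg"
    using w x unfolding C2_witness_def dg_def by (blast intro: has_derivative_linear)
  then have "(\<Sum>j\<in>UNIV. \<mu> j * dg (?v j - x)) = dg (\<Sum>j\<in>UNIV. \<mu> j *\<^sub>R (?v j - x))"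
    by (simp add: linear_sum linear_scale o_def)
  then have linear_part: "(\<Sum>j\<in>UNIV. \<mu> j * dg (?v j - x)) = 0"
    using \<open>linear dg\<close> by (simp add: sum_scaleR_centered_eq_0[OF \<mu>(2,3)] linear_0)
  define R where "R j = g (?v j) - g x - dg (?v j - x)" for j
  have R: "\<bar>R j\<bar> \<le> B / 2 * ?n * (norm (?v j - x))\<^sup>2" for j
  proof -
    have "\<bar>R j\<bar> \<le> B / 2 * (\<Sum>q\<in>UNIV. \<bar>(?v j - x) $ q\<bar>)\<^sup>2"
      unfolding R_def dg_def using convex_simplex_of x vert_in_simplex_of w bound
      by (rule C2_witness_remainder_le)
    also have "\<dots> \<le> B / 2 * (?n * (norm (?v j - x))\<^sup>2)"
      using B by (intro mult_left_mono sum_abs_sq_le_card_mult_norm_sq) simp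
    finally show ?thesis
      by (simp add: mult.assoc)
  qed
  have "(\<Sum>j\<in>UNIV. \<mu> j * g (?v j)) - g x = (\<Sum>j\<in>UNIV. \<mu> j * R j)"
    using \<mu>(2) linear_part
    by (simp add: R_def right_diff_distrib sum_subtractf flip: sum_distrib_right)
  then have "\<bar>g x - (\<Sum>j\<in>UNIV. \<mu> j * g (?v j))\<bar> = \<bar>\<Sum>j\<in>UNIV. \<mu> j * R j\<bar>"
    by (simp add: abs_minus_commute)
  also have "\<dots> \<le> B / 2 * ?n * (\<Sum>j\<in>UNIV. \<mu> j * (norm (?v j - x))\<^sup>2)"
    using \<mu>(1) R unfolding sum_distrib_left
    by (intro order_trans[OF sum_abs] sum_mono) (metis abs_mult abs_of_nonneg mult_left_mono mult.left_commute)
  also have "\<dots> \<le> B / 2 * ?n * (\<Sum>j\<in>UNIV. \<mu> j * (norm (?v j - x0))\<^sup>2)"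
    using B weighted_sum_sq_dist_le[OF \<mu>(2,3)] by (intro mult_left_mono) simp_all
  also have "\<dots> = B * (\<Sum>j\<in>UNIV. \<mu> j * (?n / 2 * (norm (?v j - x0))\<^sup>2))"
    by (simp add: sum_distrib_left algebra_simps)
  also have "\<dots> \<le> B * (\<Sum>j\<in>UNIV. \<mu> j * c_coef x0 X j)"
    using \<mu>(1) B half_card_mult_norm_sq_le_c_coef by (intro mult_left_mono sum_mono) auto
  finally show ?thesis .
qed

lemma ind_inf_norm_bdd_above:
  "bdd_above ((\<lambda>x. infnorm (A *v x)) ` {x :: real^'c. infnorm x \<le> 1})"
proof -
  obtain K where K: "\<And>x. norm (A *v x) \<le> norm x * K" "K > 0"
    using bounded_linear.pos_bounded[OF matrix_vector_mul_bounded_linear] by blast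
  have "infnorm (A *v x) \<le> sqrt DIM(real^'c) * K" if "infnorm x \<le> 1" for x :: "real^'c"
  proof -
    have "infnorm (A *v x) \<le> norm x * K"
      using infnorm_le_norm K(1) order_trans by blast
    also have "\<dots> \<le> sqrt DIM(real^'c) * infnorm x * K"
      using norm_le_infnorm[of x] K(2) by (intro mult_right_mono) simp_all
    also have "\<dots> \<le> sqrt DIM(real^'c) * K"
      using that K(2) infnorm_pos_le[of x] by (simp add: mult_left_le)
    finally show ?thesis .
  qed
  then show ?thesis
    by (intro bdd_aboveI2) auto
qed

lemma ind_inf_norm_nonneg: "0 \<le> ind_inf_norm (A :: real^'c^'r)"
proof -
  have "infnorm (A *v 0) \<le> ind_inf_norm A"
    unfolding ind_inf_norm_def by (rule cSUP_upper) (simp_all add: ind_inf_norm_bdd_above infnorm_0)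
  then show ?thesis
    by (simp add: infnorm_0)
qed

lemma infnorm_mult_le_ind_inf_norm: "infnorm (A *v v) \<le> ind_inf_norm (A :: real^'c^'r) * infnorm v"
proof (cases "v = 0")
  case True
  then show ?thesis
    by (simp add: infnorm_0)
next
  case False
  then have v: "infnorm v > 0"
    by (simp add: infnorm_pos_lt)
  have "infnorm (A *v ((1 / infnorm v) *\<^sub>R v)) \<le> ind_inf_norm A"
    unfolding ind_inf_norm_def using v
    by (intro cSUP_upper) (simp_all add: ind_inf_norm_bdd_above infnorm_mul)
  then have "infnorm (A *v v) / infnorm v \<le> ind_inf_norm A"
    using v by (simp add: matrix_vector_mult_scaleR infnorm_mul)
  then show ?thesis
    using v by (simp add: divide_le_eq)
qed

lemma norm_transpose_mult_sq_le:
  fixes A :: "real^'m^'n" and w :: "real^'n"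
  shows "(norm (transpose A *v w))\<^sup>2 \<le> ind_inf_norm (A ** transpose A) * (\<Sum>k\<in>UNIV. \<bar>w $ k\<bar>)\<^sup>2"
proof -
  let ?B = "A ** transpose A" and ?s = "\<Sum>k\<in>UNIV. \<bar>w $ k\<bar>"
  have "(norm (transpose A *v w))\<^sup>2 = (w v* A) \<bullet> (transpose A *v w)"
    unfolding power2_norm_eq_inner by simp
  also have "\<dots> = w \<bullet> (?B *v w)"
    by (simp only: dot_lmul_matrix matrix_vector_mul_assoc)
  also have "\<dots> \<le> (\<Sum>k\<in>UNIV. \<bar>w $ k\<bar> * infnorm (?B *v w))"
    unfolding inner_vec_def
    by (rule order_trans[OF sum_abs[THEN order_trans[OF abs_ge_self]]])
       (auto simp: abs_mult intro!: sum_mono mult_left_mono component_le_infnorm_cart)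
  also have "\<dots> \<le> ?s * (ind_inf_norm ?B * infnorm w)"
    by (simp add: sum_distrib_right[symmetric] sum_nonneg mult_left_mono infnorm_mult_le_ind_inf_norm)
  also have "\<dots> \<le> ?s * (ind_inf_norm ?B * ?s)"
    using infnorm_le_norm norm_le_l1_cart ind_inf_norm_nonneg
    by (intro mult_left_mono) (auto simp: sum_nonneg intro: order_trans)
  finally show ?thesis
    by (simp add: power2_eq_square mult_ac)
qed

lemma inner_le_of_componentwise_bounds:
  fixes a b w l :: "real^'n"
  assumes ab: "\<And>p. \<bar>a $ p - b $ p\<bar> \<le> e" and wl: "\<And>k. \<bar>w $ k\<bar> \<le> l $ k"
  shows "w \<bullet> a \<le> w \<bullet> b + one_dot l * e"
proof -
  have "w \<bullet> a - w \<bullet> b = (\<Sum>p\<in>UNIV. w $ p * (a $ p - b $ p))"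
    by (simp add: inner_vec_def algebra_simps sum_subtractf)
  also have "\<dots> \<le> (\<Sum>p\<in>UNIV. l $ p * e)"
  proof (rule sum_mono)
    fix p
    have "w $ p * (a $ p - b $ p) \<le> \<bar>w $ p\<bar> * \<bar>a $ p - b $ p\<bar>"
      by (simp flip: abs_mult)
    also have "\<dots> \<le> l $ p * e"
      using wl[of p] ab[of p] by (intro mult_mono) auto
    finally show "w $ p * (a $ p - b $ p) \<le> l $ p * e" .
  qed
  finally show ?thesis
    by (simp add: one_dot_def sum_distrib_right)
qed

lemma sum_weighted_H_val:
  "(\<Sum>j\<in>UNIV. \<mu> j * H_val f G h \<beta> \<beta>t \<beta>b V l \<gamma> x0 X j)
     = (\<Sum>j\<in>UNIV. \<mu> j * (f (vert x0 X j) \<bullet> cpa_grad V x0 X))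
       + 1/2 * (\<Sum>j\<in>UNIV. \<mu> j * (norm (h (vert x0 X j)))\<^sup>2)
       + (one_dot l * \<beta> + 1/2 * \<beta>t) * (\<Sum>j\<in>UNIV. \<mu> j * c_coef x0 X j)
       + 1 / (2 * \<gamma>) * (one_dot l)\<^sup>2 * (\<Sum>j\<in>UNIV. \<mu> j * gbar G (vert x0 X j))
       + 1 / (2 * \<gamma>) * (one_dot l)\<^sup>2 * \<beta>b * (\<Sum>j\<in>UNIV. \<mu> j * c_coef x0 X j)"
proof -
  have pointwise: "\<mu> j * H_val f G h \<beta> \<beta>t \<beta>b V l \<gamma> x0 X j
      = \<mu> j * (f (vert x0 X j) \<bullet> cpa_grad V x0 X)
      + 1/2 * (\<mu> j * (norm (h (vert x0 X j)))\<^sup>2)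
      + (one_dot l * \<beta> + 1/2 * \<beta>t) * (\<mu> j * c_coef x0 X j)
      + 1 / (2 * \<gamma>) * (one_dot l)\<^sup>2 * (\<mu> j * gbar G (vert x0 X j))
      + 1 / (2 * \<gamma>) * (one_dot l)\<^sup>2 * \<beta>b * (\<mu> j * c_coef x0 X j)" for j
    unfolding H_val_def by (simp add: algebra_simps)
  show ?thesis
    by (simp only: pointwise sum.distrib sum_distrib_left)
qed

lemma hamilton_jacobi_le_weighted_H_val:
  fixes f :: "real^'n \<Rightarrow> real^'n" and G :: "real^'n \<Rightarrow> real^'m^'n" and h :: "real^'n \<Rightarrow> real^'q"
  assumes f: "\<And>p. C2_bounded (simplex_of x0 X) (\<lambda>x. f x $ p) \<beta>"
    and h: "C2_bounded (simplex_of x0 X) (\<lambda>x. h x \<bullet> h x) \<beta>t"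
    and g: "C2_bounded (simplex_of x0 X) (gbar G) \<beta>b"
    and \<gamma>: "\<gamma> > 0" and l: "\<And>k. \<bar>cpa_grad V x0 X $ k\<bar> \<le> l $ k"
    and \<mu>: "\<And>j. 0 \<le> \<mu> j" "sum \<mu> UNIV = 1" "x = (\<Sum>j\<in>UNIV. \<mu> j *\<^sub>R vert x0 X j)"
  shows "cpa_grad V x0 X \<bullet> f x + 1 / (2 * \<gamma>) * (norm (transpose (G x) *v cpa_grad V x0 X))\<^sup>2
           + 1/2 * (norm (h x))\<^sup>2 \<le> (\<Sum>j\<in>UNIV. \<mu> j * H_val f G h \<beta> \<beta>t \<beta>b V l \<gamma> x0 X j)"
proof -
  let ?v = "vert x0 X"
  define w where "w = cpa_grad V x0 X"
  define s where "s = one_dot l"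
  define C where "C = (\<Sum>j\<in>UNIV. \<mu> j * c_coef x0 X j)"
  define Fw where "Fw = (\<Sum>j\<in>UNIV. \<mu> j * (f (?v j) \<bullet> w))"
  define Hh where "Hh = (\<Sum>j\<in>UNIV. \<mu> j * (norm (h (?v j)))\<^sup>2)"
  define Gb where "Gb = (\<Sum>j\<in>UNIV. \<mu> j * gbar G (?v j))"
  have f_term: "w \<bullet> f x \<le> Fw + s * (\<beta> * C)"
  proof -
    have "w \<bullet> f x \<le> w \<bullet> (\<Sum>j\<in>UNIV. \<mu> j *\<^sub>R f (?v j)) + s * (\<beta> * C)"
      unfolding s_def w_def
      by (rule inner_le_of_componentwise_bounds[OF _ l])
         (use C2_bounded_interpolation_error[OF f \<mu>] in \<open>simp add: C_def sum_component\<close>)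
    then show ?thesis
      by (simp add: Fw_def inner_sum_right inner_commute)
  qed
  have h_term: "(norm (h x))\<^sup>2 \<le> Hh + \<beta>t * C"
    using C2_bounded_interpolation_error[OF h \<mu>]
    by (simp add: Hh_def C_def power2_norm_eq_inner abs_le_iff)
  have g_term: "(norm (transpose (G x) *v w))\<^sup>2 \<le> (Gb + \<beta>b * C) * s\<^sup>2"
  proof -
    have "(norm (transpose (G x) *v w))\<^sup>2 \<le> gbar G x * (\<Sum>k\<in>UNIV. \<bar>w $ k\<bar>)\<^sup>2"
      unfolding gbar_def by (rule norm_transpose_mult_sq_le)
    also have "\<dots> \<le> gbar G x * s\<^sup>2"
      using l unfolding s_def one_dot_def w_def
      by (intro mult_left_mono power_mono sum_mono)
         (auto simp: gbar_def ind_inf_norm_nonneg sum_nonneg)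
    also have "\<dots> \<le> (Gb + \<beta>b * C) * s\<^sup>2"
      using C2_bounded_interpolation_error[OF g \<mu>]
      by (intro mult_right_mono) (auto simp: Gb_def C_def abs_le_iff)
    finally show ?thesis .
  qed
  have "(\<Sum>j\<in>UNIV. \<mu> j * H_val f G h \<beta> \<beta>t \<beta>b V l \<gamma> x0 X j)
      = Fw + 1/2 * Hh + (s * \<beta> + 1/2 * \<beta>t) * C + 1 / (2 * \<gamma>) * s\<^sup>2 * Gb
        + 1 / (2 * \<gamma>) * s\<^sup>2 * \<beta>b * C"
    unfolding sum_weighted_H_val Fw_def Hh_def C_def Gb_def w_def s_def ..
  moreover have "1 / (2 * \<gamma>) * (norm (transpose (G x) *v w))\<^sup>2 \<le> 1 / (2 * \<gamma>) * ((Gb + \<beta>b * C) * s\<^sup>2)"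
    using g_term \<gamma> by (intro mult_left_mono) auto
  ultimately show ?thesis
    using f_term h_term unfolding w_def by (simp add: algebra_simps)
qed

lemma H_val_eq_0_at_origin:
  assumes "vert x0 X j = 0" "x0 = 0" "f 0 = 0" "h 0 = 0" "gbar G 0 = 0"
  shows "H_val f G h \<beta> \<beta>t \<beta>b V l \<gamma> x0 X j = 0"
  using assms by (simp add: H_val_def c_coef_def)

(* b1 is not required to be positive, so V = 0 with any b1 below all the H values is feasible. *)
lemma conds_feasible:
  fixes x0 :: "nat \<Rightarrow> real^'n"
  shows "\<exists>V L b1 \<gamma>. conds f G h M x0 X \<beta> \<beta>t \<beta>b V L b1 \<gamma>"
proof -
  define V :: "real^'n \<Rightarrow> real" where "V = (\<lambda>_. 0)"
  define L :: "nat \<Rightarrow> real^'n" where "L = (\<lambda>_. 0)"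
  define H where "H i j = H_val f G h (\<beta> i) (\<beta>t i) (\<beta>b i) V (L i) 1 (x0 i) (X i) j" for i j
  define b1 where "b1 = - (\<Sum>i<M. \<Sum>j\<in>UNIV. \<bar>H i j\<bar>)"
  have "cpa_grad V y Y = 0" for y Y
    by (simp add: cpa_grad_def V_def vec_eq_iff matrix_vector_mult_def)
  moreover have "H i j \<le> - b1" if "i < M" for i j
  proof -
    have "H i j \<le> \<bar>H i j\<bar>"
      by simp
    also have "\<dots> \<le> (\<Sum>j\<in>UNIV. \<bar>H i j\<bar>)"
      by (rule member_le_sum) auto
    also have "\<dots> \<le> (\<Sum>i<M. \<Sum>j\<in>UNIV. \<bar>H i j\<bar>)"
      using that by (intro member_le_sum[where f = "\<lambda>i. \<Sum>j\<in>UNIV. \<bar>H i j\<bar>"]) (auto intro: sum_nonneg)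
    finally show ?thesis
      by (simp add: b1_def)
  qed
  ultimately have "conds f G h M x0 X \<beta> \<beta>t \<beta>b V L b1 1"
    by (auto simp: conds_def H_def V_def L_def)
  then show ?thesis
    by blast
qed

theorem theorem1:
  fixes f :: "real^'n \<Rightarrow> real^'n"
    and G :: "real^'n \<Rightarrow> real^'m^'n"
    and h :: "real^'n \<Rightarrow> real^'q"
    and \<X> \<Omega> :: "(real^'n) set"
    and \<U> :: "(real^'m) set"
    and M :: nat
    and x0 :: "nat \<Rightarrow> real^'n"
    and X :: "nat \<Rightarrow> 'n \<Rightarrow> real^'n"
    and \<beta> \<beta>t \<beta>b :: "nat \<Rightarrow> real"
  assumes "region \<X>" and "region \<U>" and "region \<Omega>" and "\<Omega> \<subseteq> \<X>"
    and "f 0 = 0" and "h 0 = 0" and "gbar G 0 = 0"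
    and "triangulation \<Omega> M x0 X"
    and "continuous_on \<Omega> f" and "continuous_on \<Omega> G" and "continuous_on \<Omega> h"
    and "\<forall>i<M. \<forall>p. C2_on (simplex_of (x0 i) (X i)) (\<lambda>x. f x $ p)"
    and "\<forall>i<M. \<forall>a b. C2_on (simplex_of (x0 i) (X i)) (\<lambda>x. G x $ a $ b)"
    and "\<forall>i<M. \<forall>p. C2_on (simplex_of (x0 i) (X i)) (\<lambda>x. h x $ p)"
    and "\<forall>i<M. \<forall>p. C2_bounded (simplex_of (x0 i) (X i)) (\<lambda>x. f x $ p) (\<beta> i)"
    and "\<forall>i<M. C2_bounded (simplex_of (x0 i) (X i)) (\<lambda>x. h x \<bullet> h x) (\<beta>t i)"
    and "\<forall>i<M. C2_bounded (simplex_of (x0 i) (X i)) (gbar G) (\<beta>b i)"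
  shows "(\<exists>V L b1 \<gamma>. conds f G h M x0 X \<beta> \<beta>t \<beta>b V L b1 \<gamma>)
       \<and> (\<forall>V L b1 \<gamma>. conds f G h M x0 X \<beta> \<beta>t \<beta>b V L b1 \<gamma> \<and> b1 > 0 \<longrightarrow>
            (\<forall>x\<in>interior \<Omega>. \<forall>i<M. x \<in> simplex_of (x0 i) (X i) \<longrightarrow>
               cpa_grad V (x0 i) (X i) \<bullet> f x
               + 1 / (2 * \<gamma>) * (norm (transpose (G x) *v cpa_grad V (x0 i) (X i)))\<^sup>2
               + 1/2 * (norm (h x))\<^sup>2 \<le> 0))"
proof (intro conjI allI impI ballI)
  show "\<exists>V L b1 \<gamma>. conds f G h M x0 X \<beta> \<beta>t \<beta>b V L b1 \<gamma>"
    by (rule conds_feasible)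
next
  fix V L b1 \<gamma> x i
  assume conds: "conds f G h M x0 X \<beta> \<beta>t \<beta>b V L b1 \<gamma> \<and> b1 > 0"
    and "x \<in> interior \<Omega>" and i: "i < M" and x: "x \<in> simplex_of (x0 i) (X i)"
  have tri: "triangulation \<Omega> M x0 X" by fact
  then have "is_nsimplex_data (x0 i) (X i)"
    using i by (simp add: triangulation_def)
  then obtain \<mu> where \<mu>: "\<And>j. 0 \<le> \<mu> j" "sum \<mu> UNIV = 1" "x = (\<Sum>j\<in>UNIV. \<mu> j *\<^sub>R vert (x0 i) (X i) j)"
    using simplex_of_barycentric x by blast
  have H_nonpos: "H_val f G h (\<beta> i) (\<beta>t i) (\<beta>b i) V (L i) \<gamma> (x0 i) (X i) j \<le> 0" for j
  proof (cases "vert (x0 i) (X i) j = 0")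
    case True
    then have "x0 i = 0"
      using tri i vert_in_simplex_of[of "x0 i" "X i" j] by (auto simp: triangulation_def)
    with True show ?thesis
      using assms(5-7) by (simp add: H_val_eq_0_at_origin)
  next
    case False
    then show ?thesis
      using conds i by (force simp: conds_def)
  qed
  have "cpa_grad V (x0 i) (X i) \<bullet> f x
      + 1 / (2 * \<gamma>) * (norm (transpose (G x) *v cpa_grad V (x0 i) (X i)))\<^sup>2 + 1/2 * (norm (h x))\<^sup>2
      \<le> (\<Sum>j\<in>UNIV. \<mu> j * H_val f G h (\<beta> i) (\<beta>t i) (\<beta>b i) V (L i) \<gamma> (x0 i) (X i) j)"
    using assms(15-17) i conds
    by (intro hamilton_jacobi_le_weighted_H_val \<mu>) (auto simp: conds_def)
  also have "\<dots> \<le> 0"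
    using \<mu>(1) H_nonpos by (intro sum_nonpos mult_nonneg_nonpos)
  finally show "cpa_grad V (x0 i) (X i) \<bullet> f x
      + 1 / (2 * \<gamma>) * (norm (transpose (G x) *v cpa_grad V (x0 i) (X i)))\<^sup>2
      + 1/2 * (norm (h x))\<^sup>2 \<le> 0" .
qed

end
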